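(* Let $\mathcal{C}$ be a category (no limits or colimits are assumed to exist). For every internal groupoid $(C_0,C_1,C_2,d,c,e,m,\pi_1,\pi_2,i)$ in $\mathcal{C}$, define $\theta=\langle i\pi_1,m\rangle\colon C_2\to C_2$ and $\varphi=\langle m,i\pi_2\rangle\colon C_2\to C_2$. Then $(\theta,\varphi,m\colon C_2\to C_1)$ is an involutive-2-link, and it satisfies $m\varphi=\pi_1$, $m\theta=\pi_2$, $\pi_1\varphi=m$, $\pi_1\theta=i\pi_1$, $\pi_2\varphi=i\pi_2$, $\pi_2\theta=m$. Moreover, the assignment sending such an internal groupoid to $(\theta,\varphi,m)$ and an internal functor $(f_0,f_1,f_2)$ to $f_1$ is a well-defined functor from the category of internal groupoids in $\mathcal{C}$ to the category of involutive-2-links in $\mathcal{C}$, and this functor is fully faithful.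
   Context: Notation: for morphisms $x,y\colon X\to C_1$ with $dx=cy$, $\langle x,y\rangle\colon X\to C_2$ denotes the unique morphism with $\pi_1\langle x,y\rangle=x$, $\pi_2\langle x,y\rangle=y$ (using the pullback below). Internal groupoid in a category $\mathcal{C}$: objects $C_0,C_1,C_2$ and morphisms $d,c\colon C_1\to C_0$, $e\colon C_0\to C_1$, $m,\pi_1,\pi_2\colon C_2\to C_1$, $i\colon C_1\to C_1$ such that: $de=1_{C_0}=ce$; $dm=d\pi_2$, $cm=c\pi_1$, $d\pi_1=c\pi_2$; $di=c$, $ci=d$, $i^2=1_{C_1}$, $ie=e$; the commutative square $d\pi_1=c\pi_2$ is a pullback square; $m\langle 1_{C_1},ed\rangle=1_{C_1}=m\langle ec,1_{C_1}\rangle$; $m\langle 1_{C_1},i\rangle=ec$ and $m\langle i,1_{C_1}\rangle=ed$; the cospan $d\pi_2\colon C_2\to C_0$, $c\colon C_1\to C_0$ can be completed to a pullback square $d\pi_2 p_1=c\,p_2$ with $p_1\colon C_3\to C_2$, $p_2\colon C_3\to C_1$; and $m(1\times m)=m(m\times 1)$, where $m\times 1=\langle mp_1,p_2\rangle\colon C_3\to C_2$ and $1\times m=\langle \pi_1p_1, m\langle\pi_2p_1,p_2\rangle\rangle\colon C_3\to C_2$. A morphism of internal groupoids (internal functor) is a triple $(f_0\colon C_0\to C_0',f_1\colon C_1\to C_1',f_2\colon C_2\to C_2')$ commuting with all the structure morphisms $d,c,e,m,\pi_1,\pi_2$ (and hence $i$). Involutive-2-link in $\mathcal{C}$: a triple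 $(\theta,\varphi,m)$ where $m\colon A\to B$ is a morphism and $\theta,\varphi\colon A\to A$ satisfy $\theta^2=\varphi^2=1_A$ and $\theta\varphi\theta=\varphi\theta\varphi$, and such that the three parallel morphisms $m,m\theta,m\varphi\colon A\to B$ are jointly monomorphic. A morphism from $(\theta,\varphi,m\colon A\to B)$ to $(\theta',\varphi',m'\colon A'\to B')$ is a morphism $f\colon B\to B'$ for which there exists $\bar f\colon A\to A'$ with $m'\bar f=fm$, $\theta'\bar f=\bar f\theta$, $\varphi'\bar f=\bar f\varphi$ (such $\bar f$ is then unique); composition is composition of the $f$'s. *)

theory Defs
  imports Main
begin

text \<open>A category: objects, morphisms, domain, codomain, identities and composition.
  Comp C g f is the composite "g after f" (defined when Cod f = Dom g).\<close>

record ('o, 'm) category =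
  Obj  :: "'o set"
  Mor  :: "'m set"
  Dom  :: "'m \<Rightarrow> 'o"
  Cod  :: "'m \<Rightarrow> 'o"
  Id   :: "'o \<Rightarrow> 'm"
  Comp :: "'m \<Rightarrow> 'm \<Rightarrow> 'm"

definition hom :: "('o, 'm) category \<Rightarrow> 'm \<Rightarrow> 'o \<Rightarrow> 'o \<Rightarrow> bool" where
  "hom C f a b \<longleftrightarrow> f \<in> Mor C \<and> Dom C f = a \<and> Cod C f = b"

definition is_category :: "('o, 'm) category \<Rightarrow> bool" where
  "is_category C \<longleftrightarrow>
     (\<forall>f \<in> Mor C. Dom C f \<in> Obj C \<and> Cod C f \<in> Obj C) \<and>
     (\<forall>a \<in> Obj C. hom C (Id C a) a a) \<and>
     (\<forall>f g. f \<in> Mor C \<longrightarrow> g \<in> Mor C \<longrightarrow> Cod C f = Dom C g \<longrightarrow>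
        hom C (Comp C g f) (Dom C f) (Cod C g)) \<and>
     (\<forall>f \<in> Mor C. Comp C f (Id C (Dom C f)) = f \<and> Comp C (Id C (Cod C f)) f = f) \<and>
     (\<forall>f g h. f \<in> Mor C \<longrightarrow> g \<in> Mor C \<longrightarrow> h \<in> Mor C \<longrightarrow>
        Cod C f = Dom C g \<longrightarrow> Cod C g = Dom C h \<longrightarrow>
        Comp C h (Comp C g f) = Comp C (Comp C h g) f)"

definition is_pullback :: "('o, 'm) category \<Rightarrow> 'o \<Rightarrow> 'm \<Rightarrow> 'm \<Rightarrow> 'm \<Rightarrow> 'm \<Rightarrow> bool" where
  "is_pullback C P p1 p2 f g \<longleftrightarrow>
     P \<in> Obj C \<and>
     hom C p1 P (Dom C f) \<and> hom C p2 P (Dom C g) \<and>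
     f \<in> Mor C \<and> g \<in> Mor C \<and> Cod C f = Cod C g \<and>
     Comp C f p1 = Comp C g p2 \<and>
     (\<forall>Q q1 q2. Q \<in> Obj C \<longrightarrow> hom C q1 Q (Dom C f) \<longrightarrow> hom C q2 Q (Dom C g) \<longrightarrow>
        Comp C f q1 = Comp C g q2 \<longrightarrow>
        (\<exists>!u. hom C u Q P \<and> Comp C p1 u = q1 \<and> Comp C p2 u = q2))"

definition pair :: "('o, 'm) category \<Rightarrow> 'o \<Rightarrow> 'm \<Rightarrow> 'm \<Rightarrow> 'm \<Rightarrow> 'm \<Rightarrow> 'm" where
  "pair C P p1 p2 x y =
     (THE u. hom C u (Dom C x) P \<and> Comp C p1 u = x \<and> Comp C p2 u = y)"

record ('o, 'm) igroupoid =
  gC0 :: 'o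
  gC1 :: 'o
  gC2 :: 'o
  gd  :: 'm
  gc  :: 'm
  ge  :: 'm
  gm  :: 'm
  gp1 :: 'm
  gp2 :: 'm
  gi  :: 'm

definition gpair :: "('o, 'm) category \<Rightarrow> ('o, 'm) igroupoid \<Rightarrow> 'm \<Rightarrow> 'm \<Rightarrow> 'm" where
  "gpair C G x y = pair C (gC2 G) (gp1 G) (gp2 G) x y"

definition internal_groupoid :: "('o, 'm) category \<Rightarrow> ('o, 'm) igroupoid \<Rightarrow> bool" where
  "internal_groupoid C G \<longleftrightarrow>
     (let C0 = gC0 G; C1 = gC1 G; C2 = gC2 G; d = gd G; c = gc G; e = ge G;
          m = gm G; p1 = gp1 G; p2 = gp2 G; i = gi G; comp = Comp C;
          pr = gpair C G in
     C0 \<in> Obj C \<and> C1 \<in> Obj C \<and> C2 \<in> Obj C \<and>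
     hom C d C1 C0 \<and> hom C c C1 C0 \<and> hom C e C0 C1 \<and>
     hom C m C2 C1 \<and> hom C p1 C2 C1 \<and> hom C p2 C2 C1 \<and> hom C i C1 C1 \<and>
     comp d e = Id C C0 \<and> comp c e = Id C C0 \<and>
     comp d m = comp d p2 \<and> comp c m = comp c p1 \<and> comp d p1 = comp c p2 \<and>
     comp d i = c \<and> comp c i = d \<and> comp i i = Id C C1 \<and> comp i e = e \<and>
     is_pullback C C2 p1 p2 d c \<and>
     comp m (pr (Id C C1) (comp e d)) = Id C C1 \<and>
     comp m (pr (comp e c) (Id C C1)) = Id C C1 \<and>
     comp m (pr (Id C C1) i) = comp e c \<and>
     comp m (pr i (Id C C1)) = comp e d \<and>
     (\<exists>C3 q1 q2. is_pullback C C3 q1 q2 (comp d p2) c \<and>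
        comp m (pr (comp p1 q1) (comp m (pr (comp p2 q1) q2)))
          = comp m (pr (comp m q1) q2)))"

definition internal_functor ::
  "('o, 'm) category \<Rightarrow> ('o, 'm) igroupoid \<Rightarrow> ('o, 'm) igroupoid \<Rightarrow> 'm \<times> 'm \<times> 'm \<Rightarrow> bool" where
  "internal_functor C G H f \<longleftrightarrow>
     (case f of (f0, f1, f2) \<Rightarrow>
        hom C f0 (gC0 G) (gC0 H) \<and> hom C f1 (gC1 G) (gC1 H) \<and> hom C f2 (gC2 G) (gC2 H) \<and>
        Comp C (gd H) f1 = Comp C f0 (gd G) \<and>
        Comp C (gc H) f1 = Comp C f0 (gc G) \<and>
        Comp C (ge H) f0 = Comp C f1 (ge G) \<and>
        Comp C (gm H) f2 = Comp C f1 (gm G) \<and>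
        Comp C (gp1 H) f2 = Comp C f1 (gp1 G) \<and>
        Comp C (gp2 H) f2 = Comp C f1 (gp2 G))"

definition ifun_id :: "('o, 'm) category \<Rightarrow> ('o, 'm) igroupoid \<Rightarrow> 'm \<times> 'm \<times> 'm" where
  "ifun_id C G = (Id C (gC0 G), Id C (gC1 G), Id C (gC2 G))"

definition ifun_comp :: "('o, 'm) category \<Rightarrow> 'm \<times> 'm \<times> 'm \<Rightarrow> 'm \<times> 'm \<times> 'm \<Rightarrow> 'm \<times> 'm \<times> 'm" where
  "ifun_comp C g f = (case g of (g0, g1, g2) \<Rightarrow> case f of (f0, f1, f2) \<Rightarrow>
      (Comp C g0 f0, Comp C g1 f1, Comp C g2 f2))"

definition jointly_mono3 :: "('o, 'm) category \<Rightarrow> 'm \<Rightarrow> 'm \<Rightarrow> 'm \<Rightarrow> bool" where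
  "jointly_mono3 C f g h \<longleftrightarrow>
     (\<forall>X u v. X \<in> Obj C \<longrightarrow> hom C u X (Dom C f) \<longrightarrow> hom C v X (Dom C f) \<longrightarrow>
        Comp C f u = Comp C f v \<longrightarrow> Comp C g u = Comp C g v \<longrightarrow> Comp C h u = Comp C h v \<longrightarrow>
        u = v)"

definition involutive_2_link :: "('o, 'm) category \<Rightarrow> 'm \<times> 'm \<times> 'm \<Rightarrow> bool" where
  "involutive_2_link C L \<longleftrightarrow>
     (case L of (\<theta>, \<phi>, m) \<Rightarrow>
        m \<in> Mor C \<and> hom C \<theta> (Dom C m) (Dom C m) \<and> hom C \<phi> (Dom C m) (Dom C m) \<and>
        Comp C \<theta> \<theta> = Id C (Dom C m) \<and> Comp C \<phi> \<phi> = Id C (Dom C m) \<and>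
        Comp C \<theta> (Comp C \<phi> \<theta>) = Comp C \<phi> (Comp C \<theta> \<phi>) \<and>
        jointly_mono3 C m (Comp C m \<theta>) (Comp C m \<phi>))"

definition link_mor :: "('o, 'm) category \<Rightarrow> 'm \<times> 'm \<times> 'm \<Rightarrow> 'm \<times> 'm \<times> 'm \<Rightarrow> 'm \<Rightarrow> bool" where
  "link_mor C L L' f \<longleftrightarrow>
     (case L of (\<theta>, \<phi>, m) \<Rightarrow> case L' of (\<theta>', \<phi>', m') \<Rightarrow>
        hom C f (Cod C m) (Cod C m') \<and>
        (\<exists>fb. hom C fb (Dom C m) (Dom C m') \<and> Comp C m' fb = Comp C f m \<and>
              Comp C \<theta>' fb = Comp C fb \<theta> \<and> Comp C \<phi>' fb = Comp C fb \<phi>))"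

definition link_id :: "('o, 'm) category \<Rightarrow> 'm \<times> 'm \<times> 'm \<Rightarrow> 'm" where
  "link_id C L = (case L of (\<theta>, \<phi>, m) \<Rightarrow> Id C (Cod C m))"

definition gtheta :: "('o, 'm) category \<Rightarrow> ('o, 'm) igroupoid \<Rightarrow> 'm" where
  "gtheta C G = gpair C G (Comp C (gi G) (gp1 G)) (gm G)"

definition gphi :: "('o, 'm) category \<Rightarrow> ('o, 'm) igroupoid \<Rightarrow> 'm" where
  "gphi C G = gpair C G (gm G) (Comp C (gi G) (gp2 G))"

definition link_of :: "('o, 'm) category \<Rightarrow> ('o, 'm) igroupoid \<Rightarrow> 'm \<times> 'm \<times> 'm" where
  "link_of C G = (gtheta C G, gphi C G, gm G)"

definition ifun_map :: "'m \<times> 'm \<times> 'm \<Rightarrow> 'm" where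
  "ifun_map f = fst (snd f)"

end

theory Submission
  imports Defs
begin

text \<open>
  Write \<open>xy\<close> for \<open>m\<langle>x,y\<rangle>\<close>. On composable pairs, \<open>\<theta>\<close> and \<open>\<phi>\<close> act as
  \<open>(x,y) \<mapsto> (x\<inverse>, xy)\<close> and \<open>(x,y) \<mapsto> (xy, y\<inverse>)\<close>; cancellation makes both of them
  involutions and yields the braid relation, and since \<open>m\<theta> = \<pi>\<^sub>2\<close> and \<open>m\<phi> = \<pi>\<^sub>1\<close>, the
  pullback property of \<open>C\<^sub>2\<close> makes \<open>m, m\<theta>, m\<phi>\<close> jointly monic.

  An internal functor is determined by its arrow part \<open>f\<^sub>1\<close>, because \<open>f\<^sub>0 = d f\<^sub>1 e\<close> and
  \<open>f\<^sub>2 = \<langle>f\<^sub>1\<pi>\<^sub>1, f\<^sub>1\<pi>\<^sub>2\<rangle>\<close>. Conversely, let \<open>h\<close> be a morphism of links with lifting \<open>h\<^sub>2\<close>.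
  From \<open>\<pi>\<^sub>1 = m\<phi>\<close> and \<open>\<pi>\<^sub>2 = m\<theta>\<close>, \<open>h\<^sub>2\<close> is the action of \<open>h\<close> on composable pairs and
  \<open>h\<close> preserves composition. Hence \<open>h\<close> sends identities to idempotents, which in a groupoid
  are identities, and \<open>(d h e, h, h\<^sub>2)\<close> is an internal functor.
\<close>

locale cat =
  fixes C :: "('o, 'm) category"
  assumes is_category: "is_category C"
begin

abbreviation comp_cat (infixr "\<cdot>" 55) where "g \<cdot> f \<equiv> Comp C g f"

lemma Dom_in_Obj: "f \<in> Mor C \<Longrightarrow> Dom C f \<in> Obj C"
  using is_category unfolding is_category_def by blast

lemma Id_in_Mor [simp]: "a \<in> Obj C \<Longrightarrow> Id C a \<in> Mor C"
  and Dom_Id [simp]: "a \<in> Obj C \<Longrightarrow> Dom C (Id C a) = a"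
  and Cod_Id [simp]: "a \<in> Obj C \<Longrightarrow> Cod C (Id C a) = a"
  using is_category unfolding is_category_def hom_def by blast+

lemma comp_in_Mor [simp]: "f \<in> Mor C \<Longrightarrow> g \<in> Mor C \<Longrightarrow> Cod C f = Dom C g \<Longrightarrow> g \<cdot> f \<in> Mor C"
  and Dom_comp [simp]: "f \<in> Mor C \<Longrightarrow> g \<in> Mor C \<Longrightarrow> Cod C f = Dom C g \<Longrightarrow> Dom C (g \<cdot> f) = Dom C f"
  and Cod_comp [simp]: "f \<in> Mor C \<Longrightarrow> g \<in> Mor C \<Longrightarrow> Cod C f = Dom C g \<Longrightarrow> Cod C (g \<cdot> f) = Cod C g"
  using is_category unfolding is_category_def hom_def by blast+

lemma comp_Id_right [simp]: "f \<in> Mor C \<Longrightarrow> Dom C f = a \<Longrightarrow> f \<cdot> Id C a = f"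
  and comp_Id_left [simp]: "f \<in> Mor C \<Longrightarrow> Cod C f = a \<Longrightarrow> Id C a \<cdot> f = f"
  using is_category unfolding is_category_def by blast+

lemma comp_assoc [simp]:
  "f \<in> Mor C \<Longrightarrow> g \<in> Mor C \<Longrightarrow> h \<in> Mor C \<Longrightarrow> Cod C f = Dom C g \<Longrightarrow> Cod C g = Dom C h \<Longrightarrow>
    (h \<cdot> g) \<cdot> f = h \<cdot> (g \<cdot> f)"
  using is_category unfolding is_category_def by metis

lemma comp_reassoc:
  "a \<cdot> b = r \<Longrightarrow> a \<in> Mor C \<Longrightarrow> b \<in> Mor C \<Longrightarrow> Cod C b = Dom C a \<Longrightarrow>
    x \<in> Mor C \<Longrightarrow> Cod C x = Dom C b \<Longrightarrow> a \<cdot> (b \<cdot> x) = r \<cdot> x"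
  by (metis comp_assoc)

context
  fixes P p q f g x y
  assumes pullback: "is_pullback C P p q f g"
    and x: "x \<in> Mor C" "Cod C x = Dom C f"
    and y: "y \<in> Mor C" "Cod C y = Dom C g" "Dom C y = Dom C x"
    and commutes: "f \<cdot> x = g \<cdot> y"
begin

lemma pullback_pair_ex1: "\<exists>!u. hom C u (Dom C x) P \<and> p \<cdot> u = x \<and> q \<cdot> u = y"
proof -
  have "hom C x (Dom C x) (Dom C f)" "hom C y (Dom C x) (Dom C g)"
    using x y unfolding hom_def by auto
  then show ?thesis
    using pullback Dom_in_Obj[OF x(1)] commutes unfolding is_pullback_def by blast
qed

lemma pullback_pair:
  "pair C P p q x y \<in> Mor C" "Dom C (pair C P p q x y) = Dom C x" "Cod C (pair C P p q x y) = P"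
  "p \<cdot> pair C P p q x y = x" "q \<cdot> pair C P p q x y = y"
  using theI'[OF pullback_pair_ex1] unfolding pair_def hom_def by blast+

lemma pullback_pair_unique:
  "hom C u (Dom C x) P \<Longrightarrow> p \<cdot> u = x \<Longrightarrow> q \<cdot> u = y \<Longrightarrow> u = pair C P p q x y"
  unfolding pair_def by (rule the1_equality[symmetric, OF pullback_pair_ex1]) blast

end

end

locale internal_grpd = cat +
  fixes G
  assumes internal_groupoid: "internal_groupoid C G"
begin

abbreviation "C0 \<equiv> gC0 G"
abbreviation "C1 \<equiv> gC1 G"
abbreviation "C2 \<equiv> gC2 G"
abbreviation "d \<equiv> gd G"
abbreviation "c \<equiv> gc G"
abbreviation "e \<equiv> ge G"
abbreviation "m \<equiv> gm G"
abbreviation "p1 \<equiv> gp1 G"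
abbreviation "p2 \<equiv> gp2 G"
abbreviation "i \<equiv> gi G"
abbreviation "pr \<equiv> gpair C G"

lemmas groupoid_laws = internal_groupoid[unfolded internal_groupoid_def Let_def]

lemma objects_in_Obj [simp]: "C0 \<in> Obj C" "C1 \<in> Obj C" "C2 \<in> Obj C"
  using groupoid_laws by auto

lemma structure_in_Mor [simp]:
  "d \<in> Mor C" "c \<in> Mor C" "e \<in> Mor C" "m \<in> Mor C" "p1 \<in> Mor C" "p2 \<in> Mor C" "i \<in> Mor C"
  and Dom_structure [simp]:
  "Dom C d = C1" "Dom C c = C1" "Dom C e = C0" "Dom C m = C2" "Dom C p1 = C2" "Dom C p2 = C2"
  "Dom C i = C1"
  and Cod_structure [simp]:
  "Cod C d = C0" "Cod C c = C0" "Cod C e = C1" "Cod C m = C1" "Cod C p1 = C1" "Cod C p2 = C1"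
  "Cod C i = C1"
  using groupoid_laws unfolding hom_def by auto

lemma pullback_C2: "is_pullback C C2 p1 p2 d c"
  using groupoid_laws by blast

lemma d_e [simp]: "d \<cdot> e = Id C C0"
  and c_e [simp]: "c \<cdot> e = Id C C0"
  and d_m [simp]: "d \<cdot> m = d \<cdot> p2"
  and c_m [simp]: "c \<cdot> m = c \<cdot> p1"
  and d_p1 [simp]: "d \<cdot> p1 = c \<cdot> p2"
  and d_i [simp]: "d \<cdot> i = c"
  and c_i [simp]: "c \<cdot> i = d"
  and i_i [simp]: "i \<cdot> i = Id C C1"
  and i_e [simp]: "i \<cdot> e = e"
  using groupoid_laws by blast+

lemmas structure_comp_assoc [simp] =
  d_e[THEN comp_reassoc] c_e[THEN comp_reassoc] d_m[THEN comp_reassoc] c_m[THEN comp_reassoc]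
  d_p1[THEN comp_reassoc] d_i[THEN comp_reassoc] c_i[THEN comp_reassoc] i_i[THEN comp_reassoc]
  i_e[THEN comp_reassoc]

lemma pr_simps [simp]:
  assumes "x \<in> Mor C" "Cod C x = C1" "y \<in> Mor C" "Cod C y = C1" "Dom C y = Dom C x" "d \<cdot> x = c \<cdot> y"
  shows "pr x y \<in> Mor C" "Dom C (pr x y) = Dom C x" "Cod C (pr x y) = C2"
    "p1 \<cdot> pr x y = x" "p2 \<cdot> pr x y = y"
  unfolding gpair_def using pullback_pair[OF pullback_C2] assms by auto

lemma pr_ext:
  assumes "u \<in> Mor C" "Cod C u = C2" "v \<in> Mor C" "Cod C v = C2" "Dom C u = Dom C v"
    and "p1 \<cdot> u = p1 \<cdot> v" "p2 \<cdot> u = p2 \<cdot> v"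
  shows "u = v"
proof -
  have "w = pr (p1 \<cdot> w) (p2 \<cdot> w)" if "w \<in> Mor C" "Cod C w = C2" for w
    unfolding gpair_def
    by (rule pullback_pair_unique[OF pullback_C2]) (use that in \<open>auto simp: hom_def\<close>)
  then show ?thesis
    using assms by metis
qed

lemma pr_comp [simp]:
  assumes "x \<in> Mor C" "Cod C x = C1" "y \<in> Mor C" "Cod C y = C1" "Dom C y = Dom C x" "d \<cdot> x = c \<cdot> y"
    and "z \<in> Mor C" "Cod C z = Dom C x"
  shows "pr x y \<cdot> z = pr (x \<cdot> z) (y \<cdot> z)"
proof -
  have composable: "d \<cdot> (x \<cdot> z) = c \<cdot> (y \<cdot> z)"
    using assms by (simp flip: comp_assoc)
  show ?thesis
  proof (rule pr_ext)
    show "p1 \<cdot> (pr x y \<cdot> z) = p1 \<cdot> pr (x \<cdot> z) (y \<cdot> z)"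
      and "p2 \<cdot> (pr x y \<cdot> z) = p2 \<cdot> pr (x \<cdot> z) (y \<cdot> z)"
      using assms composable by (simp_all flip: comp_assoc)
  qed (use assms composable in auto)
qed

lemma pr_p1_p2 [simp]: "pr p1 p2 = Id C C2"
  by (rule pr_ext) auto

lemma mult_unit_right [simp]:
  assumes "x \<in> Mor C" "Cod C x = C1" "d \<cdot> x = a"
  shows "m \<cdot> pr x (e \<cdot> a) = x"
proof -
  have "m \<cdot> pr x (e \<cdot> a) = (m \<cdot> pr (Id C C1) (e \<cdot> d)) \<cdot> x"
    using assms by simp
  also have "\<dots> = x"
    using assms groupoid_laws by simp
  finally show ?thesis .
qed

lemma mult_unit_left [simp]:
  assumes "x \<in> Mor C" "Cod C x = C1" "c \<cdot> x = a"
  shows "m \<cdot> pr (e \<cdot> a) x = x"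
proof -
  have "m \<cdot> pr (e \<cdot> a) x = (m \<cdot> pr (e \<cdot> c) (Id C C1)) \<cdot> x"
    using assms by simp
  also have "\<dots> = x"
    using assms groupoid_laws by simp
  finally show ?thesis .
qed

lemma mult_inverse_right [simp]:
  assumes "x \<in> Mor C" "Cod C x = C1"
  shows "m \<cdot> pr x (i \<cdot> x) = e \<cdot> (c \<cdot> x)"
proof -
  have "m \<cdot> pr x (i \<cdot> x) = (m \<cdot> pr (Id C C1) i) \<cdot> x"
    using assms by simp
  also have "\<dots> = e \<cdot> (c \<cdot> x)"
    using assms groupoid_laws by simp
  finally show ?thesis .
qed

lemma mult_inverse_left [simp]:
  assumes "x \<in> Mor C" "Cod C x = C1"
  shows "m \<cdot> pr (i \<cdot> x) x = e \<cdot> (d \<cdot> x)"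
proof -
  have "m \<cdot> pr (i \<cdot> x) x = (m \<cdot> pr i (Id C C1)) \<cdot> x"
    using assms by simp
  also have "\<dots> = e \<cdot> (d \<cdot> x)"
    using assms groupoid_laws by simp
  finally show ?thesis .
qed

text \<open>The associativity axiom is stated for the generic triple \<open>C\<^sub>3\<close>; precomposing with the
  morphism into \<open>C\<^sub>3\<close> induced by \<open>(\<langle>x,y\<rangle>, z)\<close> specialises it.\<close>

lemma mult_assoc:
  assumes x: "x \<in> Mor C" "Cod C x = C1"
    and y: "y \<in> Mor C" "Cod C y = C1" "Dom C y = Dom C x"
    and z: "z \<in> Mor C" "Cod C z = C1" "Dom C z = Dom C x"
    and composable: "d \<cdot> x = c \<cdot> y" "d \<cdot> y = c \<cdot> z"
  shows "m \<cdot> pr x (m \<cdot> pr y z) = m \<cdot> pr (m \<cdot> pr x y) z"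
proof -
  obtain C3 q1 q2 where C3: "is_pullback C C3 q1 q2 (d \<cdot> p2) c"
    and assoc_C3: "m \<cdot> pr (p1 \<cdot> q1) (m \<cdot> pr (p2 \<cdot> q1) q2) = m \<cdot> pr (m \<cdot> q1) q2"
    using groupoid_laws by blast
  have q: "q1 \<in> Mor C" "q2 \<in> Mor C" "Dom C q1 = C3" "Dom C q2 = C3" "Cod C q1 = C2"
    "Cod C q2 = C1" "d \<cdot> (p2 \<cdot> q1) = c \<cdot> q2"
    using C3 unfolding is_pullback_def hom_def by auto
  let ?t = "pair C C3 q1 q2 (pr x y) z"
  have t: "?t \<in> Mor C" "Dom C ?t = Dom C x" "Cod C ?t = C3" "q1 \<cdot> ?t = pr x y" "q2 \<cdot> ?t = z"
    using pullback_pair[OF C3, of "pr x y" z] x y z composable by auto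
  have "(m \<cdot> pr (p1 \<cdot> q1) (m \<cdot> pr (p2 \<cdot> q1) q2)) \<cdot> ?t = (m \<cdot> pr (m \<cdot> q1) q2) \<cdot> ?t"
    by (simp only: assoc_C3)
  then show ?thesis
    using q t x y z composable by simp
qed

context
  fixes x y
  assumes x: "x \<in> Mor C" "Cod C x = C1"
    and y: "y \<in> Mor C" "Cod C y = C1" "Dom C y = Dom C x"
    and composable: "d \<cdot> x = c \<cdot> y"
begin

lemma mult_cancel_left: "m \<cdot> pr (i \<cdot> x) (m \<cdot> pr x y) = y"
proof -
  have "m \<cdot> pr (i \<cdot> x) (m \<cdot> pr x y) = m \<cdot> pr (m \<cdot> pr (i \<cdot> x) x) y"
    using x y composable by (intro mult_assoc) simp_all
  also have "\<dots> = y"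
    using x y composable by simp
  finally show ?thesis .
qed

lemma mult_cancel_right: "m \<cdot> pr (m \<cdot> pr x y) (i \<cdot> y) = x"
proof -
  have "m \<cdot> pr (m \<cdot> pr x y) (i \<cdot> y) = m \<cdot> pr x (m \<cdot> pr y (i \<cdot> y))"
    using x y composable by (intro mult_assoc[symmetric]) simp_all
  also have "\<dots> = x"
    using x y composable by simp
  finally show ?thesis .
qed

end

lemma idempotent_eq_unit:
  assumes "x \<in> Mor C" "Cod C x = C1" "d \<cdot> x = c \<cdot> x" and idem: "m \<cdot> pr x x = x"
  shows "x = e \<cdot> (c \<cdot> x)"
  using mult_cancel_right[of x x] assms by simp

abbreviation "\<theta> \<equiv> gtheta C G"
abbreviation "\<phi> \<equiv> gphi C G"

lemma theta_simps [simp]: "\<theta> \<in> Mor C" "Dom C \<theta> = C2" "Cod C \<theta> = C2" "p1 \<cdot> \<theta> = i \<cdot> p1" "p2 \<cdot> \<theta> = m"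
  and phi_simps [simp]: "\<phi> \<in> Mor C" "Dom C \<phi> = C2" "Cod C \<phi> = C2" "p1 \<cdot> \<phi> = m" "p2 \<cdot> \<phi> = i \<cdot> p2"
  unfolding gtheta_def gphi_def by simp_all

lemma m_theta [simp]: "m \<cdot> \<theta> = p2"
  using mult_cancel_left[of p1 p2] unfolding gtheta_def by simp

lemma m_phi [simp]: "m \<cdot> \<phi> = p1"
  using mult_cancel_right[of p1 p2] unfolding gphi_def by simp

lemmas theta_phi_comp_assoc [simp] =
  theta_simps(4,5)[THEN comp_reassoc] phi_simps(4,5)[THEN comp_reassoc]
  m_theta[THEN comp_reassoc] m_phi[THEN comp_reassoc]

lemma involutive_2_link_of: "involutive_2_link C (link_of C G)"
proof -
  have "\<theta> \<cdot> \<theta> = Id C C2" "\<phi> \<cdot> \<phi> = Id C C2" "\<theta> \<cdot> (\<phi> \<cdot> \<theta>) = \<phi> \<cdot> (\<theta> \<cdot> \<phi>)"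
    by (rule pr_ext; simp)+
  moreover have "jointly_mono3 C m (m \<cdot> \<theta>) (m \<cdot> \<phi>)"
    unfolding jointly_mono3_def hom_def by (auto intro: pr_ext)
  ultimately show ?thesis
    unfolding involutive_2_link_def link_of_def hom_def by auto
qed

end

locale internal_grpd_pair = G: internal_grpd C G + H: internal_grpd C H
  for C :: "('o, 'm) category" and G H
begin

context
  fixes f0 f1 f2
  assumes is_functor: "internal_functor C G H (f0, f1, f2)"
begin

lemma functor_hom [simp]:
  "f0 \<in> Mor C" "Dom C f0 = G.C0" "Cod C f0 = H.C0"
  "f1 \<in> Mor C" "Dom C f1 = G.C1" "Cod C f1 = H.C1"
  "f2 \<in> Mor C" "Dom C f2 = G.C2" "Cod C f2 = H.C2"
  using is_functor unfolding internal_functor_def hom_def by auto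

lemma functor_comm [simp]:
  "H.d \<cdot> f1 = f0 \<cdot> G.d" "H.c \<cdot> f1 = f0 \<cdot> G.c" "H.e \<cdot> f0 = f1 \<cdot> G.e"
  "H.m \<cdot> f2 = f1 \<cdot> G.m" "H.p1 \<cdot> f2 = f1 \<cdot> G.p1" "H.p2 \<cdot> f2 = f1 \<cdot> G.p2"
  using is_functor unfolding internal_functor_def by auto

lemmas functor_comm_assoc [simp] = functor_comm[THEN G.comp_reassoc]

lemma functor_preserves_inverse: "f1 \<cdot> G.i = H.i \<cdot> f1"
proof -
  have pair_image: "H.pr f1 (f1 \<cdot> G.i) = f2 \<cdot> G.pr (Id C G.C1) G.i"
    by (rule H.pr_ext) simp_all
  have inverse_image: "H.m \<cdot> H.pr f1 (f1 \<cdot> G.i) = H.e \<cdot> (H.c \<cdot> f1)"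
    unfolding pair_image using G.groupoid_laws by simp
  have "f1 \<cdot> G.i = H.m \<cdot> H.pr (H.i \<cdot> f1) (H.m \<cdot> H.pr f1 (f1 \<cdot> G.i))"
    by (rule H.mult_cancel_left[symmetric]) simp_all
  also have "\<dots> = H.m \<cdot> H.pr (H.i \<cdot> f1) (H.e \<cdot> (H.c \<cdot> f1))"
    by (simp only: inverse_image)
  also have "\<dots> = H.i \<cdot> f1"
    by (rule H.mult_unit_right) simp_all
  finally show ?thesis .
qed

lemmas functor_inverse_assoc [simp] = functor_preserves_inverse[symmetric, THEN G.comp_reassoc]

lemma functor_link_mor: "link_mor C (link_of C G) (link_of C H) f1"
proof -
  have "H.\<theta> \<cdot> f2 = f2 \<cdot> G.\<theta>" "H.\<phi> \<cdot> f2 = f2 \<cdot> G.\<phi>"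
    by (rule H.pr_ext; simp add: functor_preserves_inverse[symmetric])+
  then show ?thesis
    unfolding link_mor_def link_of_def hom_def by (auto intro!: exI[of _ f2])
qed

lemma functor_determined_by_arrows:
  "f0 = H.d \<cdot> (f1 \<cdot> G.e)" "f2 = H.pr (f1 \<cdot> G.p1) (f1 \<cdot> G.p2)"
  by simp (rule H.pr_ext; simp)

end

lemma ifun_map_link_mor:
  "internal_functor C G H f \<Longrightarrow> link_mor C (link_of C G) (link_of C H) (ifun_map f)"
  using functor_link_mor by (cases f) (simp add: ifun_map_def)

lemma ifun_map_faithful:
  assumes "internal_functor C G H f" "internal_functor C G H g" "ifun_map f = ifun_map g"
  shows "f = g"
proof -
  obtain f0 f1 f2 g0 g1 g2 where fg: "f = (f0, f1, f2)" "g = (g0, g1, g2)"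
    by (metis prod_cases3)
  moreover have "f1 = g1"
    using fg assms(3) by (simp add: ifun_map_def)
  ultimately show ?thesis
    using assms(1,2) functor_determined_by_arrows by metis
qed

context
  fixes h h2
  assumes h: "h \<in> Mor C" "Dom C h = G.C1" "Cod C h = H.C1"
    and h2: "h2 \<in> Mor C" "Dom C h2 = G.C2" "Cod C h2 = H.C2"
    and m_h2: "H.m \<cdot> h2 = h \<cdot> G.m"
    and p1_h2: "H.p1 \<cdot> h2 = h \<cdot> G.p1"
    and p2_h2: "H.p2 \<cdot> h2 = h \<cdot> G.p2"
begin

lemmas pair_map_comp_assoc [simp] =
  m_h2[THEN G.comp_reassoc] p1_h2[THEN G.comp_reassoc] p2_h2[THEN G.comp_reassoc]

lemma unit_image_is_unit: "H.d \<cdot> (h \<cdot> G.e) = H.c \<cdot> (h \<cdot> G.e)" "H.e \<cdot> (H.d \<cdot> (h \<cdot> G.e)) = h \<cdot> G.e"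
proof -
  let ?u = "G.pr G.e G.e"
  have u: "?u \<in> Mor C" "Dom C ?u = G.C0" "Cod C ?u = G.C2" "G.p1 \<cdot> ?u = G.e" "G.p2 \<cdot> ?u = G.e"
    "G.m \<cdot> ?u = G.e"
    using G.mult_unit_right[of G.e "Id C G.C0"] by simp_all
  have "H.d \<cdot> (H.p1 \<cdot> (h2 \<cdot> ?u)) = (H.c \<cdot> H.p2) \<cdot> (h2 \<cdot> ?u)"
    by (rule H.d_p1[THEN G.comp_reassoc]) (use u h2 in simp_all)
  then show composable: "H.d \<cdot> (h \<cdot> G.e) = H.c \<cdot> (h \<cdot> G.e)"
    using u h h2 by simp
  have image_u: "h2 \<cdot> ?u \<in> Mor C" "Dom C (h2 \<cdot> ?u) = G.C0" "Cod C (h2 \<cdot> ?u) = H.C2"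
    "H.p1 \<cdot> (h2 \<cdot> ?u) = h \<cdot> G.e" "H.p2 \<cdot> (h2 \<cdot> ?u) = h \<cdot> G.e"
    using u h h2 by simp_all
  have pair_u: "h2 \<cdot> ?u = H.pr (h \<cdot> G.e) (h \<cdot> G.e)"
    by (rule H.pr_ext) (simp_all add: image_u h composable)
  have "H.m \<cdot> H.pr (h \<cdot> G.e) (h \<cdot> G.e) = h \<cdot> G.e"
    unfolding pair_u[symmetric] using u h h2 by simp
  then show "H.e \<cdot> (H.d \<cdot> (h \<cdot> G.e)) = h \<cdot> G.e"
    using H.idempotent_eq_unit[of "h \<cdot> G.e"] h composable by simp
qed

lemma arrows_commute_d_c: "H.d \<cdot> h = (H.d \<cdot> (h \<cdot> G.e)) \<cdot> G.d" "H.c \<cdot> h = (H.d \<cdot> (h \<cdot> G.e)) \<cdot> G.c"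
proof -
  let ?l = "G.pr (Id C G.C1) (G.e \<cdot> G.d)" and ?r = "G.pr (G.e \<cdot> G.c) (Id C G.C1)"
  have l: "?l \<in> Mor C" "Dom C ?l = G.C1" "Cod C ?l = G.C2" "G.m \<cdot> ?l = Id C G.C1"
    and r: "?r \<in> Mor C" "Dom C ?r = G.C1" "Cod C ?r = G.C2" "G.m \<cdot> ?r = Id C G.C1"
    using G.groupoid_laws by simp_all
  have "H.d \<cdot> h = H.d \<cdot> (H.m \<cdot> (h2 \<cdot> ?l))"
    using l h h2 by simp
  also have "\<dots> = (H.d \<cdot> H.p2) \<cdot> (h2 \<cdot> ?l)"
    by (rule H.d_m[THEN G.comp_reassoc]) (use l h2 in simp_all)
  also have "\<dots> = (H.d \<cdot> (h \<cdot> G.e)) \<cdot> G.d"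
    using l h h2 by simp
  finally show "H.d \<cdot> h = (H.d \<cdot> (h \<cdot> G.e)) \<cdot> G.d" .
  have "H.c \<cdot> h = H.c \<cdot> (H.m \<cdot> (h2 \<cdot> ?r))"
    using r h h2 by simp
  also have "\<dots> = (H.c \<cdot> H.p1) \<cdot> (h2 \<cdot> ?r)"
    by (rule H.c_m[THEN G.comp_reassoc]) (use r h2 in simp_all)
  also have "\<dots> = (H.c \<cdot> (h \<cdot> G.e)) \<cdot> G.c"
    using r h h2 by simp
  also have "\<dots> = (H.d \<cdot> (h \<cdot> G.e)) \<cdot> G.c"
    by (simp only: unit_image_is_unit(1))
  finally show "H.c \<cdot> h = (H.d \<cdot> (h \<cdot> G.e)) \<cdot> G.c" .
qed

lemma internal_functor_of_arrows: "internal_functor C G H (H.d \<cdot> (h \<cdot> G.e), h, h2)"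
  using h h2 m_h2 p1_h2 p2_h2 arrows_commute_d_c unit_image_is_unit(2)
  unfolding internal_functor_def hom_def by simp

end

lemma link_mor_lift:
  assumes "link_mor C (link_of C G) (link_of C H) h"
  obtains h2 where "h \<in> Mor C" "Dom C h = G.C1" "Cod C h = H.C1"
    "h2 \<in> Mor C" "Dom C h2 = G.C2" "Cod C h2 = H.C2"
    "H.m \<cdot> h2 = h \<cdot> G.m" "H.p1 \<cdot> h2 = h \<cdot> G.p1" "H.p2 \<cdot> h2 = h \<cdot> G.p2"
proof -
  obtain h2 where h: "h \<in> Mor C" "Dom C h = G.C1" "Cod C h = H.C1"
    and h2: "h2 \<in> Mor C" "Dom C h2 = G.C2" "Cod C h2 = H.C2"
    and m_h2: "H.m \<cdot> h2 = h \<cdot> G.m"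
    and theta_h2: "H.\<theta> \<cdot> h2 = h2 \<cdot> G.\<theta>" and phi_h2: "H.\<phi> \<cdot> h2 = h2 \<cdot> G.\<phi>"
    using assms unfolding link_mor_def link_of_def hom_def by auto
  have "H.p1 \<cdot> h2 = h \<cdot> G.p1"
  proof -
    have "H.p1 \<cdot> h2 = H.m \<cdot> (H.\<phi> \<cdot> h2)"
      using h2 by simp
    also have "\<dots> = (H.m \<cdot> h2) \<cdot> G.\<phi>"
      using h2 phi_h2 by simp
    also have "\<dots> = h \<cdot> G.p1"
      using h h2 m_h2 by simp
    finally show ?thesis .
  qed
  moreover have "H.p2 \<cdot> h2 = h \<cdot> G.p2"
  proof -
    have "H.p2 \<cdot> h2 = H.m \<cdot> (H.\<theta> \<cdot> h2)"
      using h2 by simp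
    also have "\<dots> = (H.m \<cdot> h2) \<cdot> G.\<theta>"
      using h2 theta_h2 by simp
    also have "\<dots> = h \<cdot> G.p2"
      using h h2 m_h2 by simp
    finally show ?thesis .
  qed
  ultimately show ?thesis
    using that h h2 m_h2 by simp
qed

lemma ifun_map_full:
  assumes "link_mor C (link_of C G) (link_of C H) h"
  shows "\<exists>f. internal_functor C G H f \<and> ifun_map f = h"
proof -
  obtain h2 where "internal_functor C G H (H.d \<cdot> (h \<cdot> G.e), h, h2)"
    using link_mor_lift[OF assms] internal_functor_of_arrows by metis
  then show ?thesis
    unfolding ifun_map_def by force
qed

end

lemma internal_grpdI: "is_category C \<Longrightarrow> internal_groupoid C G \<Longrightarrow> internal_grpd C G"
  by (simp add: internal_grpd_def internal_grpd_axioms_def cat_def)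

lemma internal_grpd_pairI:
  "is_category C \<Longrightarrow> internal_groupoid C G \<Longrightarrow> internal_groupoid C H \<Longrightarrow> internal_grpd_pair C G H"
  by (simp add: internal_grpd_pair_def internal_grpdI)

theorem proposition3p1:
  fixes C :: "('o, 'm) category"
  assumes "is_category C"
  shows
   "(\<forall>G. internal_groupoid C G \<longrightarrow>
        involutive_2_link C (link_of C G) \<and>
        Comp C (gm G) (gphi C G) = gp1 G \<and>
        Comp C (gm G) (gtheta C G) = gp2 G \<and>
        Comp C (gp1 G) (gphi C G) = gm G \<and>
        Comp C (gp1 G) (gtheta C G) = Comp C (gi G) (gp1 G) \<and>
        Comp C (gp2 G) (gphi C G) = Comp C (gi G) (gp2 G) \<and>
        Comp C (gp2 G) (gtheta C G) = gm G)
    \<and> (\<forall>G H f. internal_groupoid C G \<longrightarrow> internal_groupoid C H \<longrightarrow>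
          internal_functor C G H f \<longrightarrow>
          link_mor C (link_of C G) (link_of C H) (ifun_map f))
    \<and> (\<forall>G. internal_groupoid C G \<longrightarrow>
          ifun_map (ifun_id C G) = link_id C (link_of C G))
    \<and> (\<forall>G H K f g. internal_groupoid C G \<longrightarrow> internal_groupoid C H \<longrightarrow>
          internal_groupoid C K \<longrightarrow>
          internal_functor C G H f \<longrightarrow> internal_functor C H K g \<longrightarrow>
          ifun_map (ifun_comp C g f) = Comp C (ifun_map g) (ifun_map f))
    \<and> (\<forall>G H. internal_groupoid C G \<longrightarrow> internal_groupoid C H \<longrightarrow>
          (\<forall>f g. internal_functor C G H f \<longrightarrow> internal_functor C G H g \<longrightarrow>
                 ifun_map f = ifun_map g \<longrightarrow> f = g) \<and>
          (\<forall>h. link_mor C (link_of C G) (link_of C H) h \<longrightarrow>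
                 (\<exists>f. internal_functor C G H f \<and> ifun_map f = h)))"
proof (intro conjI allI impI)
  fix G
  assume "internal_groupoid C G"
  then interpret internal_grpd C G
    using assms by (blast intro: internal_grpdI)
  show "involutive_2_link C (link_of C G)"
    by (rule involutive_2_link_of)
  show "Comp C (gm G) (gphi C G) = gp1 G" "Comp C (gm G) (gtheta C G) = gp2 G"
    "Comp C (gp1 G) (gphi C G) = gm G" "Comp C (gp1 G) (gtheta C G) = Comp C (gi G) (gp1 G)"
    "Comp C (gp2 G) (gphi C G) = Comp C (gi G) (gp2 G)" "Comp C (gp2 G) (gtheta C G) = gm G"
    by simp_all
  show "ifun_map (ifun_id C G) = link_id C (link_of C G)"
    unfolding ifun_map_def ifun_id_def link_id_def link_of_def by simp
next
  fix G H f
  assume "internal_groupoid C G" "internal_groupoid C H" "internal_functor C G H f"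
  then interpret internal_grpd_pair C G H
    using assms by (blast intro: internal_grpd_pairI)
  show "link_mor C (link_of C G) (link_of C H) (ifun_map f)"
    by (rule ifun_map_link_mor) fact
next
  fix G H K f g
  show "ifun_map (ifun_comp C g f) = Comp C (ifun_map g) (ifun_map f)"
    unfolding ifun_map_def ifun_comp_def by (cases f; cases g) simp
next
  fix G H f g
  assume "internal_groupoid C G" "internal_groupoid C H"
    and "internal_functor C G H f" "internal_functor C G H g" "ifun_map f = ifun_map g"
  then interpret internal_grpd_pair C G H
    using assms by (blast intro: internal_grpd_pairI)
  show "f = g"
    by (rule ifun_map_faithful) fact+
next
  fix G H h
  assume "internal_groupoid C G" "internal_groupoid C H"
    and "link_mor C (link_of C G) (link_of C H) h"
  then interpret internal_grpd_pair C G H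
    using assms by (blast intro: internal_grpd_pairI)
  show "\<exists>f. internal_functor C G H f \<and> ifun_map f = h"
    by (rule ifun_map_full) fact
qed

end
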